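(* Let $n\ge2$, $p\in\mathbb{Q}[t]$, $q(t)=t\,p(t)$, and $e_1=t_1+\dots+t_n$. Then \[ a_{(p,1,0,\dots,0)}=a_{(p,0,0,\dots,0)}\cdot e_1-a_{(q,0,0,\dots,0)}. \]
   Context: For $p\in\mathbb{Q}[t]$ and nonnegative integers $\lambda_2,\dots,\lambda_n$, $a_{(p,\lambda_2,\dots,\lambda_n)}(t_1,\dots,t_n)$ is the determinant of the $n\times n$ matrix whose first row is $(p(t_1),\dots,p(t_n))$ and whose $k$-th row, for $k=2,\dots,n$, is $(t_1^{\lambda_k+n-k},\dots,t_n^{\lambda_k+n-k})$. *)

theory Defs
  imports "HOL-Computational_Algebra.Polynomial" "Jordan_Normal_Form.Determinant"
begin

text \<open>The alternant a_(p,lambda_2,...,lambda_n) evaluated at (t_1,...,t_n) = (t 0, ..., t (n-1)).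
  Rows and columns are indexed from 0: row 0 is (p(t_1),...,p(t_n)); row i (1 <= i < n),
  i.e. the paper's row k = i+1, is (t_j ^ (lambda_k + n - k))_j.  The exponents lambda_k are
  given by the function lam, indexed by the paper's k (only k = 2..n is used).\<close>
definition alt_det :: "nat \<Rightarrow> rat poly \<Rightarrow> (nat \<Rightarrow> nat) \<Rightarrow> (nat \<Rightarrow> rat) \<Rightarrow> rat" where
  "alt_det n p lam t =
     det (mat n n (\<lambda>(i, j). if i = 0 then poly p (t j) else t j ^ (lam (i + 1) + n - (i + 1))))"

end

theory Submission imports Defs begin

text \<open>Multiplying row i of a square matrix entrywise by column weights t j and summing the
  determinants over i multiplies the determinant by t 0 + ... + t (n-1): each permutation term
  picks up the factor t (p i), and these factors sum to the total weight.  For the alternant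
  a_(p,0,...,0), scaling the first row gives a_(q,0,...,0), scaling the second row gives
  a_(p,1,0,...,0), and scaling any later row makes it equal to the row above it.\<close>

definition multrow_by_cols :: "nat \<Rightarrow> (nat \<Rightarrow> 'a::times) \<Rightarrow> 'a mat \<Rightarrow> 'a mat" where
  "multrow_by_cols i t A =
     mat (dim_row A) (dim_col A) (\<lambda>(k, j). if k = i then t j * A $$ (k, j) else A $$ (k, j))"

lemma sum_det_multrow_by_cols:
  fixes A :: "'a::comm_ring_1 mat"
  assumes A: "A \<in> carrier_mat n n"
  shows "(\<Sum>i<n. det (multrow_by_cols i t A)) = det A * (\<Sum>j<n. t j)"
proof -
  let ?P = "{p. p permutes {0..<n}}"
  let ?term = "\<lambda>p. signof p * (\<Prod>k = 0..<n. A $$ (k, p k))"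
  have perm_lt: "p k < n" if "p \<in> ?P" "k < n" for p k
    using that permutes_in_image[of p "{0..<n}" k] by auto
  have det_scaled: "det (multrow_by_cols i t A) = (\<Sum>p\<in>?P. t (p i) * ?term p)"
    if i: "i < n" for i
  proof -
    have "(\<Prod>k = 0..<n. multrow_by_cols i t A $$ (k, p k)) = t (p i) * (\<Prod>k = 0..<n. A $$ (k, p k))"
      if p: "p \<in> ?P" for p
    proof -
      have "(\<Prod>k = 0..<n. multrow_by_cols i t A $$ (k, p k))
          = (\<Prod>k = 0..<n. (if k = i then t (p k) else 1) * A $$ (k, p k))"
        using A perm_lt[OF p] by (intro prod.cong) (auto simp: multrow_by_cols_def)
      then show ?thesis
        using i by (simp add: prod.distrib prod.delta)
    qed
    moreover have "multrow_by_cols i t A \<in> carrier_mat n n"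
      using A by (simp add: multrow_by_cols_def)
    ultimately show ?thesis
      by (simp add: det_def' mult_ac)
  qed
  have weight_perm: "(\<Sum>i<n. t (p i)) = (\<Sum>j<n. t j)" if "p \<in> ?P" for p
    using that permutes_imp_bij[of p "{..<n}"]
    by (simp add: atLeast0LessThan sum.reindex_bij_betw)
  have "(\<Sum>i<n. det (multrow_by_cols i t A)) = (\<Sum>i<n. \<Sum>p\<in>?P. t (p i) * ?term p)"
    by (simp add: det_scaled)
  also have "\<dots> = (\<Sum>p\<in>?P. ?term p * (\<Sum>i<n. t (p i)))"
    by (subst sum.swap) (simp add: sum_distrib_left sum_distrib_right mult_ac)
  also have "\<dots> = (\<Sum>p\<in>?P. ?term p) * (\<Sum>j<n. t j)"
    by (simp add: weight_perm sum_distrib_right)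
  also have "\<dots> = det A * (\<Sum>j<n. t j)"
    using A by (simp add: det_def')
  finally show ?thesis .
qed

definition alt_mat :: "nat \<Rightarrow> rat poly \<Rightarrow> (nat \<Rightarrow> nat) \<Rightarrow> (nat \<Rightarrow> rat) \<Rightarrow> rat mat" where
  "alt_mat n p lam t =
     mat n n (\<lambda>(i, j). if i = 0 then poly p (t j) else t j ^ (lam (i + 1) + n - (i + 1)))"

lemma alt_det_eq_det_alt_mat: "alt_det n p lam t = det (alt_mat n p lam t)"
  by (simp add: alt_det_def alt_mat_def)

lemma alt_mat_carrier: "alt_mat n p lam t \<in> carrier_mat n n"
  by (simp add: alt_mat_def)

lemma multrow_by_cols_first_alt_mat:
  "multrow_by_cols 0 t (alt_mat n p lam t) = alt_mat n ([:0, 1:] * p) lam t"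
  by (rule eq_matI) (auto simp: multrow_by_cols_def alt_mat_def)

lemma multrow_by_cols_second_alt_mat:
  "multrow_by_cols 1 t (alt_mat n p lam t) = alt_mat n p (lam(2 := Suc (lam 2))) t"
proof (rule eq_matI)
  fix i j
  assume "i < dim_row (alt_mat n p (lam(2 := Suc (lam 2))) t)"
    and "j < dim_col (alt_mat n p (lam(2 := Suc (lam 2))) t)"
  then have ij: "i < n" "j < n"
    by (simp_all add: alt_mat_def)
  have "t j * t j ^ (lam 2 + n - 2) = t j ^ (Suc (lam 2) + n - 2)" if "1 < n"
  proof -
    have "Suc (lam 2) + n - 2 = Suc (lam 2 + n - 2)"
      using that by simp
    then show ?thesis
      by simp
  qed
  with ij show "multrow_by_cols 1 t (alt_mat n p lam t) $$ (i, j)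
      = alt_mat n p (lam(2 := Suc (lam 2))) t $$ (i, j)"
    by (auto simp: multrow_by_cols_def alt_mat_def numeral_2_eq_2)
qed (simp_all add: multrow_by_cols_def alt_mat_def)

text \<open>Row i of alt_mat is the paper's row i+1, so the hypothesis reads lambda_i = lambda_(i+1).\<close>

lemma det_multrow_by_cols_alt_mat_eq_0:
  assumes "2 \<le> i" "i < n" "lam i = lam (Suc i)"
  shows "det (multrow_by_cols i t (alt_mat n p lam t)) = 0"
proof (rule det_identical_rows[of _ n i "i - 1"])
  show "multrow_by_cols i t (alt_mat n p lam t) \<in> carrier_mat n n"
    by (simp add: multrow_by_cols_def alt_mat_def)
  have "t j * t j ^ (lam (Suc i) + n - Suc i) = t j ^ (lam i + n - i)" for j
    using assms by (simp add: Suc_diff_Suc flip: power_Suc)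
  then show "row (multrow_by_cols i t (alt_mat n p lam t)) i
      = row (multrow_by_cols i t (alt_mat n p lam t)) (i - 1)"
    using assms by (intro eq_vecI) (auto simp: multrow_by_cols_def alt_mat_def)
qed (use assms in auto)

theorem lemma3p9:
  fixes n :: nat and p q :: "rat poly" and t :: "nat \<Rightarrow> rat"
  assumes "n \<ge> 2"
    and "q = [:0, 1:] * p"
  shows "alt_det n p (\<lambda>k. if k = 2 then 1 else 0) t
         = alt_det n p (\<lambda>k. 0) t * (\<Sum>j<n. t j) - alt_det n q (\<lambda>k. 0) t"
proof -
  let ?A = "alt_mat n p (\<lambda>k. 0) t"
  let ?D = "\<lambda>i. det (multrow_by_cols i t ?A)"
  have "{..<n} = {0, 1} \<union> {2..<n}"
    using assms(1) by auto
  then have "(\<Sum>i<n. ?D i) = ?D 0 + ?D 1 + (\<Sum>i = 2..<n. ?D i)"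
    by (simp add: sum.union_disjoint)
  also have "(\<Sum>i = 2..<n. ?D i) = 0"
    by (intro sum.neutral ballI det_multrow_by_cols_alt_mat_eq_0) auto
  also have "?D 0 = alt_det n q (\<lambda>k. 0) t"
    by (simp add: assms(2) multrow_by_cols_first_alt_mat alt_det_eq_det_alt_mat)
  also have "?D 1 = alt_det n p (\<lambda>k. if k = 2 then 1 else 0) t"
  proof -
    have "(\<lambda>k. 0)(2 := Suc 0) = (\<lambda>k::nat. if k = 2 then 1 else 0 :: nat)"
      by auto
    then show ?thesis
      by (simp only: multrow_by_cols_second_alt_mat alt_det_eq_det_alt_mat)
  qed
  finally show ?thesis
    using sum_det_multrow_by_cols[OF alt_mat_carrier] by (simp add: alt_det_eq_det_alt_mat)
qed

end
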